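(* Let $d$ be an even positive integer and $s$ a positive integer with $2s\leqslant d$. For every $\varepsilon\in I^s$, $\overline{B_\varepsilon}=B_{\bar\varepsilon}$.
   Context: Let $I=\{0,1\}$. For $x\in I^n$, its antipode is $\bar x=(1-x_1,\ldots,1-x_n)$, and for $A\subseteq I^n$, $\bar A=\{\bar x\colon x\in A\}$; $|x|=\sum_i x_i$. Let $\alpha=(0,\ldots,0)$, $\omega=(1,\ldots,1)\in I^s$. For $\varepsilon\in I^s\setminus\{\alpha,\omega\}$ let $i=t(\varepsilon)$ be the unique index with $\varepsilon_i\neq\varepsilon_{i+1}=\cdots=\varepsilon_s$, and $A_\varepsilon=\{\varepsilon_1\}\times\cdots\times\{\varepsilon_i\}\times I^{s-1-i}\subseteq I^{s-1}$. Define subsets of $I^{d-s}$: $X_0=\{x\colon |x|\leqslant \frac d2-s\}$; $X_k=\{x\colon |x|=\frac d2-s+k\}$ for $0<k<s$; $X_s=\{x\colon |x|\geqslant \frac d2\}$. For $\varepsilon\in I^s\setminus\{\alpha,\omega\}$ set $B_\varepsilon=X_{|\varepsilon|}\cap(I^{d-2s+1}\times A_\varepsilon)$ (where $I^{d-s}=I^{d-2s+1}\times I^{s-1}$), and set $B_\alpha=X_0$, $B_\omega=X_s$. *)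

theory Defs
  imports Main
begin

text \<open>Points of I^n are lists of length n with entries in {0,1} (entry i of the list is
  coordinate i+1).\<close>
definition cube :: "nat \<Rightarrow> nat list set" where
  "cube n = {x. length x = n \<and> set x \<subseteq> {0, 1}}"

definition antipode :: "nat list \<Rightarrow> nat list" where
  "antipode x = map (\<lambda>a. 1 - a) x"

definition antipode_set :: "nat list set \<Rightarrow> nat list set" where
  "antipode_set A = antipode ` A"

definition wt :: "nat list \<Rightarrow> nat" where
  "wt x = sum_list x"

definition alpha :: "nat \<Rightarrow> nat list" where
  "alpha s = replicate s 0"

definition omega :: "nat \<Rightarrow> nat list" where
  "omega s = replicate s 1"

text \<open>t(eps): the unique (1-based) index i with eps_i \<noteq> eps_(i+1) = ... = eps_s.\<close>
definition tidx :: "nat list \<Rightarrow> nat" where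
  "tidx e = (THE i. 1 \<le> i \<and> i < length e \<and> e ! (i - 1) \<noteq> e ! i \<and>
                    (\<forall>j. i \<le> j \<and> j < length e \<longrightarrow> e ! j = e ! i))"

text \<open>A_eps = {eps_1} x ... x {eps_i} x I^(s-1-i), a subset of I^(s-1), where i = t(eps).\<close>
definition Aeps :: "nat list \<Rightarrow> nat list set" where
  "Aeps e = {y \<in> cube (length e - 1). take (tidx e) y = take (tidx e) e}"

definition Xset :: "nat \<Rightarrow> nat \<Rightarrow> nat \<Rightarrow> nat list set" where
  "Xset d s k = {x \<in> cube (d - s).
      (if k = 0 then wt x \<le> d div 2 - s
       else if k < s then wt x = d div 2 - s + k
       else wt x \<ge> d div 2)}"

text \<open>B_eps, using I^(d-s) = I^(d-2s+1) x I^(s-1).\<close>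
definition Bset :: "nat \<Rightarrow> nat \<Rightarrow> nat list \<Rightarrow> nat list set" where
  "Bset d s e =
     (if e = alpha s then Xset d s 0
      else if e = omega s then Xset d s s
      else {x \<in> Xset d s (wt e). drop (d - 2 * s + 1) x \<in> Aeps e})"

end

theory Submission
  imports Defs
begin

(* The antipodal map x |-> x-bar is an involution of the cube sending weight w to n - w.
   On I^(d-s) with d even it therefore swaps the weight layers X_k and X_(s-k), since
   d - s - (d/2 - s + k) = d/2 - s + (s - k).  It also swaps alpha and omega, and, acting
   coordinatewise by an injective map, it preserves the index t(eps) and maps A_eps onto
   A_(eps-bar).  Hence both conditions defining B_eps turn into those defining B_(eps-bar). *)

lemma length_antipode [simp]: "length (antipode x) = length x"
  by (simp add: antipode_def)

lemma antipode_in_cube: "x \<in> cube n \<Longrightarrow> antipode x \<in> cube n"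
  by (auto simp: cube_def antipode_def)

lemma inj_on_bit_flip: "inj_on (\<lambda>a::nat. 1 - a) {0, 1}"
  by (auto simp: inj_on_def)

lemma antipode_antipode: "x \<in> cube n \<Longrightarrow> antipode (antipode x) = x"
  unfolding cube_def antipode_def by (induction x arbitrary: n) auto

lemma antipode_alpha [simp]: "antipode (alpha s) = omega s"
  and antipode_omega [simp]: "antipode (omega s) = alpha s"
  by (simp_all add: antipode_def alpha_def omega_def)

lemma drop_antipode: "drop k (antipode x) = antipode (drop k x)"
  by (simp add: antipode_def drop_map)

lemma drop_in_cube: "x \<in> cube n \<Longrightarrow> drop k x \<in> cube (n - k)"
  by (auto simp: cube_def dest: in_set_dropD)

lemma wt_antipode_add: "set x \<subseteq> {0, 1} \<Longrightarrow> wt (antipode x) + wt x = length x"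
  unfolding wt_def antipode_def by (induction x) auto

lemma wt_antipode: "x \<in> cube n \<Longrightarrow> wt (antipode x) = n - wt x"
  using wt_antipode_add[of x] by (auto simp: cube_def)

lemma cube_wt_le: "x \<in> cube n \<Longrightarrow> wt x \<le> n"
  using wt_antipode_add[of x] by (auto simp: cube_def)

lemma wt_alpha [simp]: "wt (alpha n) = 0"
  by (simp add: wt_def alpha_def)

lemma wt_omega [simp]: "wt (omega n) = n"
  unfolding wt_def omega_def by (induction n) auto

lemma tidx_map_inj_on: "inj_on f (set e) \<Longrightarrow> tidx (map f e) = tidx e"
proof -
  assume inj: "inj_on f (set e)"
  have "map f e ! i = map f e ! j \<longleftrightarrow> e ! i = e ! j" if "i < length e" "j < length e" for i j
    using that inj_on_eq_iff[OF inj nth_mem nth_mem] by simp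
  then have "(map f e ! (i - 1) \<noteq> map f e ! i) = (e ! (i - 1) \<noteq> e ! i)
      \<and> (\<forall>j. i \<le> j \<and> j < length e \<longrightarrow> map f e ! j = map f e ! i)
          = (\<forall>j. i \<le> j \<and> j < length e \<longrightarrow> e ! j = e ! i)"
    if "1 \<le> i" "i < length e" for i
    using that by auto
  then show ?thesis
    unfolding tidx_def length_map by (metis (no_types, opaque_lifting))
qed

lemma tidx_antipode: "e \<in> cube s \<Longrightarrow> tidx (antipode e) = tidx e"
  unfolding antipode_def cube_def
  by (blast intro: tidx_map_inj_on inj_on_subset[OF inj_on_bit_flip])

lemma antipode_in_Aeps_antipode_iff:
  assumes e: "e \<in> cube s" and y: "y \<in> cube m"
  shows "antipode y \<in> Aeps (antipode e) \<longleftrightarrow> y \<in> Aeps e"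
proof -
  have "antipode y \<in> cube n \<longleftrightarrow> y \<in> cube n" for n
    using y antipode_in_cube[of y] by (auto simp: cube_def)
  moreover have "take t (antipode y) = take t (antipode e) \<longleftrightarrow> take t y = take t e" for t
    using e y unfolding antipode_def cube_def take_map
    by (intro inj_on_map_eq_map inj_on_subset[OF inj_on_bit_flip])
      (auto dest: in_set_takeD)
  ultimately show ?thesis
    unfolding Aeps_def tidx_antipode[OF e] by simp
qed

lemma antipode_in_Xset_iff:
  assumes "even d" "0 < s" "2 * s \<le> d" "k \<le> s" and x: "x \<in> cube (d - s)"
  shows "antipode x \<in> Xset d s k \<longleftrightarrow> x \<in> Xset d s (s - k)"
proof -
  obtain h where d: "d = 2 * h" using \<open>even d\<close> by blast
  have w: "wt (antipode x) = d - s - wt x" "wt x \<le> d - s"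
    using wt_antipode[OF x] cube_wt_le[OF x] by simp_all
  consider "k = 0" | "0 < k" "k < s" | "k = s" using \<open>k \<le> s\<close> by linarith
  then show ?thesis
    unfolding Xset_def using x antipode_in_cube[OF x] assms(2,3)
    by cases (use w in \<open>auto simp: d\<close>)
qed

lemma Bset_conv:
  "Bset d s e = {x \<in> Xset d s (wt e).
     e = alpha s \<or> e = omega s \<or> drop (d - 2 * s + 1) x \<in> Aeps e}"
  by (auto simp: Bset_def)

lemma Bset_subset_cube: "Bset d s e \<subseteq> cube (d - s)"
  by (auto simp: Bset_def Xset_def)

lemma antipode_set_eqI:
  assumes "A \<subseteq> cube n" "B \<subseteq> cube n"
    and "\<And>x. x \<in> cube n \<Longrightarrow> x \<in> B \<longleftrightarrow> antipode x \<in> A"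
  shows "antipode_set A = B"
proof
  show "antipode_set A \<subseteq> B"
    using assms by (auto simp: antipode_set_def antipode_antipode antipode_in_cube subset_iff)
  show "B \<subseteq> antipode_set A"
  proof
    fix x assume "x \<in> B"
    then have "x = antipode (antipode x)" "antipode x \<in> A"
      using assms antipode_antipode by auto
    then show "x \<in> antipode_set A" unfolding antipode_set_def by blast
  qed
qed

theorem lemma3:
  fixes d s :: nat and e :: "nat list"
  assumes "even d" and "0 < d" and "0 < s" and "2 * s \<le> d"
    and "e \<in> cube s"
  shows "antipode_set (Bset d s e) = Bset d s (antipode e)"
proof (rule antipode_set_eqI[OF Bset_subset_cube Bset_subset_cube])
  fix x assume x: "x \<in> cube (d - s)"
  let ?k = "d - 2 * s + 1"
  have e: "antipode (antipode e) = e" using antipode_antipode[OF \<open>e \<in> cube s\<close>] .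
  have "antipode x \<in> Xset d s (wt e) \<longleftrightarrow> x \<in> Xset d s (wt (antipode e))"
    using antipode_in_Xset_iff[OF assms(1,3,4) cube_wt_le[OF assms(5)] x]
    by (simp add: wt_antipode[OF assms(5)])
  moreover have "e = alpha s \<or> e = omega s \<longleftrightarrow> antipode e = omega s \<or> antipode e = alpha s"
    using e by force
  moreover have "drop ?k (antipode x) \<in> Aeps e \<longleftrightarrow> drop ?k x \<in> Aeps (antipode e)"
    using antipode_in_Aeps_antipode_iff[OF antipode_in_cube[OF assms(5)] drop_in_cube[OF x]]
    by (simp add: e drop_antipode)
  ultimately show "x \<in> Bset d s (antipode e) \<longleftrightarrow> antipode x \<in> Bset d s e"
    unfolding Bset_conv using x by blast
qed

end
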